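(* Let $\mathbb{F}$ be a field, let $U$ and $U'$ be finite-dimensional $\mathbb{F}$-vector spaces with $\dim U>1$, and let $b$ be a symplectic form on $U'$. Let $\mathcal{V}\subseteq \operatorname{Hom}_{\mathbb{F}}(U,U')$ be a linear subspace such that the range of every element of $\mathcal{V}$ is totally $b$-singular. Then $$\dim\mathcal{V}\le \frac{(\dim U)(\dim U')}{2}.$$ Moreover, if $\dim U>2$ and $\dim\mathcal{V}=\frac{(\dim U)(\dim U')}{2}$, then $\mathcal{V}=\operatorname{Hom}_{\mathbb{F}}(U,\mathcal{L})$ for some Lagrangian $\mathcal{L}$ of $(U',b)$.
   Context: A symplectic form is a non-degenerate alternating bilinear form ($b(x,x)=0$ for all $x$). A subspace $W$ is totally $b$-singular if $b(x,y)=0$ for all $x,y\in W$. A Lagrangian of $(U',b)$ is a totally $b$-singular subspace of $U'$ of dimension $\frac{\dim U'}{2}$. *)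

theory Defs
  imports Complex_Main "HOL-Library.Function_Algebras"
begin

definition fin_dim_vs :: "('f::field \<Rightarrow> 'v::ab_group_add \<Rightarrow> 'v) \<Rightarrow> bool" where
  "fin_dim_vs scale \<longleftrightarrow> vector_space scale \<and>
     (\<exists>B. finite B \<and> module.span scale B = UNIV)"

definition hom_scale :: "('f \<Rightarrow> 'w \<Rightarrow> 'w) \<Rightarrow> 'f \<Rightarrow> ('u \<Rightarrow> 'w) \<Rightarrow> ('u \<Rightarrow> 'w)" where
  "hom_scale scaleW c f = (\<lambda>x. scaleW c (f x))"

definition Hom :: "('f::field \<Rightarrow> 'u::ab_group_add \<Rightarrow> 'u) \<Rightarrow> ('f \<Rightarrow> 'w::ab_group_add \<Rightarrow> 'w)
    \<Rightarrow> 'w set \<Rightarrow> ('u \<Rightarrow> 'w) set" where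
  "Hom scaleU scaleW W = {f. Vector_Spaces.linear scaleU scaleW f \<and> range f \<subseteq> W}"

definition bilinear_form :: "('f::field \<Rightarrow> 'w::ab_group_add \<Rightarrow> 'w) \<Rightarrow> ('w \<Rightarrow> 'w \<Rightarrow> 'f) \<Rightarrow> bool" where
  "bilinear_form scaleW b \<longleftrightarrow>
     (\<forall>x. Vector_Spaces.linear scaleW (*) (b x)) \<and>
     (\<forall>y. Vector_Spaces.linear scaleW (*) (\<lambda>x. b x y))"

definition symplectic_form :: "('f::field \<Rightarrow> 'w::ab_group_add \<Rightarrow> 'w) \<Rightarrow> ('w \<Rightarrow> 'w \<Rightarrow> 'f) \<Rightarrow> bool" where
  "symplectic_form scaleW b \<longleftrightarrow> bilinear_form scaleW b \<and>
     (\<forall>x. b x x = 0) \<and>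
     (\<forall>x. (\<forall>y. b x y = 0) \<longrightarrow> x = 0)"

definition totally_singular :: "('w \<Rightarrow> 'w \<Rightarrow> 'f::zero) \<Rightarrow> 'w set \<Rightarrow> bool" where
  "totally_singular b W \<longleftrightarrow> (\<forall>x\<in>W. \<forall>y\<in>W. b x y = 0)"

definition lagrangian :: "('f::field \<Rightarrow> 'w::ab_group_add \<Rightarrow> 'w) \<Rightarrow> ('w \<Rightarrow> 'w \<Rightarrow> 'f) \<Rightarrow> 'w set \<Rightarrow> bool" where
  "lagrangian scaleW b L \<longleftrightarrow> module.subspace scaleW L \<and> totally_singular b L \<and>
     2 * vector_space.dim scaleW L = vector_space.dim scaleW (UNIV :: 'w set)"

end

theory Submission
  imports Defs
begin

(* Fix a finite basis B of U. A map in V is determined by the B-tuple of its values, and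
  singularity of its range says b(h e, h e') = 0 for all entries of the tuple h. For a subspace X
  of such tuples indexed by S, pick a in S and restrict the tuples to T = S - {a}: the restriction
  P has entries spanning some R, so dim P <= |T| dim R, while the kernel consists of tuples
  supported at a whose entry at a is, by polarization, b-orthogonal to R. Hence
  dim X + dim R <= dim P + dim U', and induction on |S| gives 2 dim X <= |S| dim U'.
  If equality holds and |S| >= 3, every step is tight: each R is a Lagrangian and the restriction
  of X to T consists of all R-valued tuples. Any value in R is then taken at every index of T,
  which forces all these R to agree with the span L of all entries, and X to consist of all
  L-valued tuples. *)

(* Functions vanishing outside S stand for S-tuples: tuple_space S L is L^S, and restrict_zero S
  turns a map into the tuple of its values on S. *)
definition restrict_zero :: "'a set \<Rightarrow> ('a \<Rightarrow> 'b::zero) \<Rightarrow> 'a \<Rightarrow> 'b" where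
  "restrict_zero S f = (\<lambda>x. if x \<in> S then f x else 0)"

definition tuple_space :: "'a set \<Rightarrow> 'b::zero set \<Rightarrow> ('a \<Rightarrow> 'b) set" where
  "tuple_space S L = {h. (\<forall>e. e \<notin> S \<longrightarrow> h e = 0) \<and> (\<forall>e\<in>S. h e \<in> L)}"

lemma restrict_zero_apply [simp]: "x \<in> S \<Longrightarrow> restrict_zero S f x = f x"
  by (simp add: restrict_zero_def)

lemma restrict_zero_eq_0_iff: "restrict_zero S f = 0 \<longleftrightarrow> (\<forall>x\<in>S. f x = 0)"
  by (auto simp: restrict_zero_def fun_eq_iff)

lemma inj_on_eval_tuple_space: "inj_on (\<lambda>h. h a) (tuple_space {a} L)"
proof (rule inj_onI)
  fix g h assume gh: "g \<in> tuple_space {a} L" "h \<in> tuple_space {a} L" "g a = h a"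
  have "g e = h e" for e
    using gh by (cases "e = a") (auto simp: tuple_space_def)
  then show "g = h"
    by (rule ext)
qed

lemma vector_space_hom_scale:
  assumes "vector_space s"
  shows "vector_space (hom_scale s)"
proof -
  interpret vector_space s by fact
  show ?thesis
    by unfold_locales (auto simp: hom_scale_def fun_eq_iff scale_right_distrib scale_left_distrib)
qed

lemma vector_space_field: "vector_space ((*) :: 'f::field \<Rightarrow> 'f \<Rightarrow> 'f)"
  by unfold_locales (auto simp: algebra_simps)

lemma fin_dim_vs_obtain_basis:
  assumes "fin_dim_vs s"
  obtains B where "finite B" "module.span s B = UNIV" "card B = vector_space.dim s UNIV"
proof -
  interpret vector_space s
    using assms by (simp add: fin_dim_vs_def)
  obtain F where F: "finite F" "span F = UNIV"
    using assms by (auto simp: fin_dim_vs_def)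
  obtain B where B: "independent B" "UNIV \<subseteq> span B" "card B = dim UNIV"
    using basis_exists by blast
  have "finite B"
    using independent_span_bound[OF F(1) B(1)] F(2) by auto
  with B show ?thesis
    using that by blast
qed

lemma sum_fun_apply: "(\<Sum>i\<in>A. f i) x = (\<Sum>i\<in>A. f i x)"
  by (induct A rule: infinite_finite_induct) auto

context vector_space
begin

lemma dim_subset_in_span:
  assumes "S \<subseteq> T" "T \<subseteq> span F" "finite F"
  shows "dim S \<le> dim T"
proof -
  obtain B where B: "B \<subseteq> T" "independent B" "T \<subseteq> span B" "card B = dim T"
    using basis_exists by blast
  have "finite B"
    using independent_span_bound[OF assms(3) B(2)] B(1) assms(2) by auto
  have "dim S \<le> card B"
    using assms(1) B(3) \<open>finite B\<close> by (intro dim_le_card) auto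
  with B(4) show ?thesis
    by simp
qed

lemma subspace_dim_equal_in_span:
  assumes S: "subspace S" and ST: "S \<subseteq> T" and T: "T \<subseteq> span F" "finite F"
    and dim: "dim T \<le> dim S"
  shows "S = T"
proof (rule ccontr)
  assume "S \<noteq> T"
  with ST obtain t where t: "t \<in> T" "t \<notin> S"
    by blast
  obtain B where B: "B \<subseteq> S" "independent B" "S \<subseteq> span B" "card B = dim S"
    using basis_exists by blast
  have "B \<subseteq> span F"
    using B(1) ST T(1) by blast
  then have "finite B"
    using independent_span_bound[OF T(2) B(2)] by blast
  have "t \<notin> span B"
    using t(2) span_minimal[OF B(1) S] by blast
  then have "independent (insert t B)" "t \<notin> B"
    using independent_insertI[OF _ B(2)] span_base by blast+
  then have "dim (insert t B) = dim S + 1"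
    using \<open>finite B\<close> B(4) by (simp add: dim_eq_card_independent)
  moreover have "insert t B \<subseteq> T"
    using t(1) B(1) ST by blast
  then have "dim (insert t B) \<le> dim T"
    using T by (rule dim_subset_in_span)
  ultimately show False
    using dim by simp
qed

lemma linear_restrict_zero: "Vector_Spaces.linear (hom_scale scale) (hom_scale scale) (restrict_zero S)"
  using vector_space_hom_scale[OF vector_space_axioms]
  by (auto simp: Vector_Spaces.linear_iff hom_scale_def restrict_zero_def fun_eq_iff)

lemma linear_eval: "Vector_Spaces.linear (hom_scale scale) scale (\<lambda>h. h a)"
  using vector_space_hom_scale[OF vector_space_axioms] vector_space_axioms
  by (auto simp: Vector_Spaces.linear_iff hom_scale_def)

lemma linear_fun_upd_zero: "Vector_Spaces.linear scale (hom_scale scale) (\<lambda>r. 0(e := r))"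
  using vector_space_hom_scale[OF vector_space_axioms] vector_space_axioms
  by (auto simp: Vector_Spaces.linear_iff hom_scale_def fun_eq_iff)

lemma tuple_space_subset_span:
  assumes "finite S" "L \<subseteq> span B"
  shows "tuple_space S L \<subseteq> module.span (hom_scale scale) ((\<lambda>(e, r). 0(e := r)) ` (S \<times> B))"
proof
  interpret H: vector_space "hom_scale scale"
    by (rule vector_space_hom_scale[OF vector_space_axioms])
  interpret WH: vector_space_pair scale "hom_scale scale" ..
  fix h assume h: "h \<in> tuple_space S L"
  have "h = (\<Sum>e\<in>S. 0(e := h e))"
  proof
    fix x
    have "(\<Sum>e\<in>S. 0(e := h e)) x = (if x \<in> S then h x else 0)"
      using assms(1) by (simp add: sum_fun_apply zero_fun_def sum.delta')
    then show "h x = (\<Sum>e\<in>S. 0(e := h e)) x"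
      using h by (simp add: tuple_space_def)
  qed
  also have "\<dots> \<in> H.span ((\<lambda>(e, r). 0(e := r)) ` (S \<times> B))"
  proof (rule H.span_sum)
    fix e assume e: "e \<in> S"
    have "0(e := h e) \<in> (\<lambda>r. 0(e := r)) ` span B"
      using h e assms(2) by (auto simp: tuple_space_def)
    also have "\<dots> = H.span ((\<lambda>r. 0(e := r)) ` B)"
      by (rule WH.linear_span_image[OF linear_fun_upd_zero, symmetric])
    also have "\<dots> \<subseteq> H.span ((\<lambda>(e, r). 0(e := r)) ` (S \<times> B))"
      using e by (intro H.span_mono) auto
    finally show "0(e := h e) \<in> H.span ((\<lambda>(e, r). 0(e := r)) ` (S \<times> B))" .
  qed
  finally show "h \<in> H.span ((\<lambda>(e, r). 0(e := r)) ` (S \<times> B))" .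
qed

end

context vector_space_pair
begin

lemma dim_image_eq_if_inj_on:
  assumes f: "Vector_Spaces.linear s1 s2 f" and inj: "inj_on f (vs1.span S)"
  shows "vs2.dim (f ` S) = vs1.dim S"
proof -
  obtain B where B: "B \<subseteq> S" "vs1.independent B" "S \<subseteq> vs1.span B" "card B = vs1.dim S"
    using vs1.basis_exists by blast
  have inj_B: "inj_on f (vs1.span B)"
    using inj vs1.span_mono[OF B(1)] by (rule inj_on_subset)
  have "vs2.dim (f ` S) = card (f ` B)"
    using B(1) linear_independent_injective_image[OF f B(2) inj_B] linear_spans_image[OF f B(3)]
    by (intro vs2.basis_card_eq_dim[symmetric]) auto
  also have "\<dots> = card B"
    using inj_on_subset[OF inj_B vs1.span_superset] by (rule card_image)
  finally show ?thesis
    using B(4) by simp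
qed

lemma dim_le_card_if_inj_on:
  assumes f: "Vector_Spaces.linear s1 s2 f" and inj: "inj_on f (vs1.span S)"
    and T: "f ` S \<subseteq> vs2.span T" "finite T"
  shows "vs1.dim S \<le> card T"
  using dim_image_eq_if_inj_on[OF f inj] vs2.dim_le_card[OF T] by simp

lemma dim_le_dim_image_plus_dim_kernel:
  assumes f: "Vector_Spaces.linear s1 s2 f" and X: "vs1.subspace X"
    and XF: "X \<subseteq> vs1.span F" "finite F"
  shows "vs1.dim X \<le> vs2.dim (f ` X) + vs1.dim {x\<in>X. f x = 0}"
proof -
  define K where "K = {x\<in>X. f x = 0}"
  obtain C' where C': "C' \<subseteq> f ` X" "vs2.independent C'" "f ` X \<subseteq> vs2.span C'"
      "card C' = vs2.dim (f ` X)"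
    using vs2.basis_exists by blast
  have "C' \<subseteq> vs2.span (f ` F)"
    using C'(1) linear_spans_image[OF f XF(1)] by blast
  then have "finite C'"
    using vs2.independent_span_bound[OF _ C'(2)] XF(2) by blast
  obtain C where C: "C \<subseteq> X" "inj_on f C" "C' = f ` C"
    using C'(1) subset_image_inj by metis
  obtain BK where BK: "BK \<subseteq> K" "vs1.independent BK" "K \<subseteq> vs1.span BK" "card BK = vs1.dim K"
    using vs1.basis_exists by blast
  have "BK \<subseteq> vs1.span F"
    using BK(1) XF(1) by (auto simp: K_def)
  then have "finite BK"
    using vs1.independent_span_bound[OF XF(2) BK(2)] by blast
  have "X \<subseteq> vs1.span (C \<union> BK)"
  proof
    fix x assume x: "x \<in> X"
    have "f x \<in> f ` vs1.span C"
      using x C'(3) C(3) linear_span_image[OF f] by blast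
    then obtain y where y: "y \<in> vs1.span C" "f y = f x"
      by auto
    have "y \<in> X"
      using y(1) vs1.span_minimal[OF C(1) X] by blast
    then have "x - y \<in> K"
      using x y(2) vs1.subspace_diff[OF X] linear_diff[OF f] by (simp add: K_def)
    then have "x - y \<in> vs1.span (C \<union> BK)"
      using BK(3) vs1.span_mono[of BK "C \<union> BK"] by blast
    moreover have "y \<in> vs1.span (C \<union> BK)"
      using y(1) vs1.span_mono[of C "C \<union> BK"] by blast
    ultimately have "y + (x - y) \<in> vs1.span (C \<union> BK)"
      using vs1.span_add by blast
    then show "x \<in> vs1.span (C \<union> BK)"
      by simp
  qed
  moreover have "finite C"
    using \<open>finite C'\<close> C(2,3) by (simp add: finite_image_iff)
  ultimately have "vs1.dim X \<le> card (C \<union> BK)"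
    using \<open>finite BK\<close> by (intro vs1.dim_le_card) auto
  also have "\<dots> \<le> card C + card BK"
    by (rule card_Un_le)
  also have "card C = card C'"
    using C(2,3) by (simp add: card_image)
  finally show ?thesis
    using C'(4) BK(4) by (simp add: K_def)
qed

lemma linear_eq_if_restrict_zero_eq:
  assumes "vs1.span B = UNIV" "Vector_Spaces.linear s1 s2 f" "Vector_Spaces.linear s1 s2 g"
    and "restrict_zero B f = restrict_zero B g"
  shows "f = g"
proof
  fix x
  have "f b = g b" if "b \<in> B" for b
    using fun_cong[OF assms(4), of b] that by simp
  then show "f x = g x"
    using linear_eq_on[OF assms(2,3)] assms(1) by blast
qed

end

lemma two_le_card_obtain:
  assumes "2 \<le> card A"
  obtains x y where "x \<in> A" "y \<in> A" "x \<noteq> y"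
proof -
  have "finite A" "\<not> card A \<le> Suc 0"
    using assms card.infinite by fastforce+
  then show thesis
    using that card_le_Suc0_iff_eq[of A] by blast
qed

lemma totally_singular_subset: "A \<subseteq> B \<Longrightarrow> totally_singular b B \<Longrightarrow> totally_singular b A"
  unfolding totally_singular_def by blast

(* The dimension count of the induction step, with x = dim X, p = dim P, r = dim R,
  m = dim U' and n = |T|. *)
lemma dim_count_step_le:
  fixes x p r m n :: nat
  assumes step: "x + r \<le> p + m" and p: "p \<le> n * r" and n: "1 \<le> n"
    and IH: "2 \<le> n \<Longrightarrow> 2 * p \<le> n * m"
  shows "2 * x \<le> (n + 1) * m"
proof (cases "2 * r \<le> m")
  case True
  obtain k where k: "n = Suc k"
    using n by (cases n) auto
  have "2 * (k * r) \<le> k * m"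
    using mult_le_mono2[OF True, of k] by (simp only: mult.left_commute[of k 2])
  moreover have "p \<le> r + k * r" "(n + 1) * m = 2 * m + k * m"
    using p k by simp_all
  ultimately show ?thesis
    using step by linarith
next
  case False
  show ?thesis
  proof (cases "n = 1")
    case True
    then show ?thesis
      using step p by simp
  next
    case False
    then have "2 * p \<le> n * m"
      using n IH by simp
    then show ?thesis
      using \<open>\<not> 2 * r \<le> m\<close> step by simp
  qed
qed

lemma dim_count_step_eq:
  fixes x p r m n :: nat
  assumes step: "x + r \<le> p + m" and p: "p \<le> n * r" and n: "2 \<le> n"
    and IH: "2 * p \<le> n * m" and eq: "2 * x = (n + 1) * m"
  shows "2 * r = m" "p = n * r"
proof -
  obtain k where k: "n = Suc k" "1 \<le> k"
    using n by (cases n) auto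
  have lower: "k * m + 2 * r \<le> 2 * p"
    using step eq k(1) by simp
  have upper: "2 * p \<le> m + k * m" "p \<le> r + k * r"
    using IH p k(1) by simp_all
  have "k * m \<le> 2 * (k * r)"
    using lower upper(2) by linarith
  then have "k * m \<le> k * (2 * r)"
    by (simp only: mult.left_commute[of k 2])
  then have "m \<le> 2 * r"
    using k(2) by simp
  with lower upper show r: "2 * r = m"
    by linarith
  then have "k * m = 2 * (k * r)"
    by (simp add: mult.left_commute[of k 2])
  with lower upper r show "p = n * r"
    using k(1) by simp
qed

locale nondegenerate_bilinear_space =
  fixes scaleW :: "'f::field \<Rightarrow> 'w::ab_group_add \<Rightarrow> 'w"
    and b :: "'w \<Rightarrow> 'w \<Rightarrow> 'f"
  assumes fin_dim: "fin_dim_vs scaleW"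
    and bilinear: "bilinear_form scaleW b"
    and nondegenerate: "\<And>x. (\<And>y. b x y = 0) \<Longrightarrow> x = 0"
begin

sublocale W: vector_space scaleW
  using fin_dim by (simp add: fin_dim_vs_def)

sublocale H: vector_space "hom_scale scaleW :: 'f \<Rightarrow> ('a \<Rightarrow> 'w) \<Rightarrow> _"
  by (rule vector_space_hom_scale[OF W.vector_space_axioms])

sublocale HH: vector_space_pair "hom_scale scaleW :: 'f \<Rightarrow> ('a \<Rightarrow> 'w) \<Rightarrow> _"
  "hom_scale scaleW :: 'f \<Rightarrow> ('a \<Rightarrow> 'w) \<Rightarrow> _" ..

sublocale HW: vector_space_pair "hom_scale scaleW :: 'f \<Rightarrow> ('a \<Rightarrow> 'w) \<Rightarrow> _" scaleW ..

sublocale WF: vector_space_pair scaleW "(*) :: 'f \<Rightarrow> 'f \<Rightarrow> 'f"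
  using W.vector_space_axioms vector_space_field by (rule vector_space_pair.intro)

abbreviation dimW :: nat where
  "dimW \<equiv> W.dim (UNIV :: 'w set)"

lemma b_linear_left: "Vector_Spaces.linear scaleW (*) (\<lambda>x. b x y)"
  using bilinear by (simp add: bilinear_form_def)

lemma b_linear_right: "Vector_Spaces.linear scaleW (*) (b x)"
  using bilinear by (simp add: bilinear_form_def)

lemma b_add_left: "b (x + x') y = b x y + b x' y"
  using WF.linear_add[OF b_linear_left] .

lemma b_add_right: "b x (y + y') = b x y + b x y'"
  using WF.linear_add[OF b_linear_right] .

lemma b_scale_left: "b (scaleW c x) y = c * b x y"
  using WF.linear_scale[OF b_linear_left] .

lemma b_zero_right [simp]: "b x 0 = 0"
  using WF.linear_0[OF b_linear_right] .

lemma obtain_finite_span_W: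
  obtains F where "finite F" "W.span F = UNIV"
  using fin_dim by (auto simp: fin_dim_vs_def)

lemma linear_restrict_zero_form: "Vector_Spaces.linear scaleW (hom_scale (*)) (\<lambda>w. restrict_zero B (b w))"
  unfolding Vector_Spaces.linear_iff
  using W.vector_space_axioms vector_space_hom_scale[OF vector_space_field]
  by (simp add: restrict_zero_def hom_scale_def fun_eq_iff b_add_left b_scale_left)

lemma inj_restrict_zero_form:
  assumes "W.span B = UNIV"
  shows "inj (\<lambda>w. restrict_zero B (b w))"
proof (rule injI)
  fix x y assume eq: "restrict_zero B (b x) = restrict_zero B (b y)"
  have "b x e - b y e = 0" if "e \<in> B" for e
    using that fun_cong[OF eq, of e] by simp
  then have "b (x - y) z = 0" for z
    using WF.linear_eq_0_on_span[OF b_linear_right] assms WF.linear_diff[OF b_linear_left]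
    by (metis UNIV_I)
  then show "x = y"
    using nondegenerate[of "x - y"] by simp
qed

lemma dim_orthogonal_le:
  assumes R: "W.subspace R"
  shows "W.dim {w. \<forall>r\<in>R. b w r = 0} + W.dim R \<le> dimW"
proof -
  interpret WM: vector_space_pair scaleW "hom_scale (*) :: 'f \<Rightarrow> ('w \<Rightarrow> 'f) \<Rightarrow> _"
    using W.vector_space_axioms vector_space_hom_scale[OF vector_space_field]
    by (rule vector_space_pair.intro)
  obtain F where F: "finite F" "W.span F = UNIV"
    by (rule obtain_finite_span_W)
  obtain BR where BR: "BR \<subseteq> R" "W.independent BR" "R \<subseteq> W.span BR" "card BR = W.dim R"
    using W.basis_exists by blast
  obtain BW where BW: "BR \<subseteq> BW" "BW \<subseteq> UNIV" "W.independent BW" "UNIV \<subseteq> W.span BW"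
    by (rule W.maximal_independent_subset_extend[OF subset_UNIV BR(2)])
  have "finite BW"
    using W.independent_span_bound[OF F(1) BW(3)] F(2) by blast
  have "card BW = dimW"
    using W.basis_card_eq_dim[OF _ BW(4,3)] by simp
  define T where "T = (\<lambda>(e, r). 0(e := r)) ` ((BW - BR) \<times> {1 :: 'f})"
  have "(\<lambda>w. restrict_zero BW (b w)) ` {w. \<forall>r\<in>R. b w r = 0} \<subseteq> tuple_space (BW - BR) UNIV"
    using BR(1) by (auto simp: tuple_space_def restrict_zero_def)
  also have "\<dots> \<subseteq> WM.vs2.span T"
    unfolding T_def
  proof (rule WF.vs2.tuple_space_subset_span)
    show "finite (BW - BR)"
      using \<open>finite BW\<close> by simp
    show "UNIV \<subseteq> WF.vs2.span {1}"
      using WF.vs2.span_scale[OF WF.vs2.span_base[of 1 "{1}"]] by auto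
  qed
  finally have image: "(\<lambda>w. restrict_zero BW (b w)) ` {w. \<forall>r\<in>R. b w r = 0} \<subseteq> WM.vs2.span T" .
  have "inj (\<lambda>w. restrict_zero BW (b w))"
    using BW(4) by (intro inj_restrict_zero_form) auto
  then have "W.dim {w. \<forall>r\<in>R. b w r = 0} \<le> card T"
    using image \<open>finite BW\<close>
    by (intro WM.dim_le_card_if_inj_on[OF linear_restrict_zero_form]) (auto simp: T_def intro: inj_on_subset)
  also have "\<dots> \<le> card (BW - BR)"
    using card_image_le[of "(BW - BR) \<times> {1 :: 'f}"] \<open>finite BW\<close> by (simp add: T_def)
  also have "\<dots> = dimW - W.dim R"
    using card_Diff_subset[OF finite_subset[OF BW(1) \<open>finite BW\<close>] BW(1)] \<open>card BW = dimW\<close> BR(4)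
    by simp
  finally show ?thesis
    using card_mono[OF \<open>finite BW\<close> BW(1)] \<open>card BW = dimW\<close> BR(4) by linarith
qed

lemma finite_span_tuple_space:
  assumes "finite S"
  obtains F :: "('a \<Rightarrow> 'w) set" where "finite F" "tuple_space S L \<subseteq> H.span F"
proof -
  obtain G where G: "finite G" "W.span G = UNIV"
    by (rule obtain_finite_span_W)
  show thesis
    using that[OF _ W.tuple_space_subset_span[OF assms, of L G]] assms G by simp
qed

lemma dim_tuple_space_le:
  assumes S: "finite S" and L: "W.subspace L"
  shows "H.dim (tuple_space S L :: ('a \<Rightarrow> 'w) set) \<le> card S * W.dim L"
proof -
  obtain G where G: "finite G" "W.span G = UNIV"
    by (rule obtain_finite_span_W)
  obtain BL where BL: "BL \<subseteq> L" "W.independent BL" "L \<subseteq> W.span BL" "card BL = W.dim L"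
    using W.basis_exists by blast
  have "finite BL"
    using W.independent_span_bound[OF G(1) BL(2)] G(2) by blast
  have "H.dim (tuple_space S L :: ('a \<Rightarrow> 'w) set)
      \<le> card ((\<lambda>(e, r). 0(e := r) :: 'a \<Rightarrow> 'w) ` (S \<times> BL))"
    using W.tuple_space_subset_span[OF S BL(3)] S \<open>finite BL\<close> by (intro H.dim_le_card) auto
  also have "\<dots> \<le> card (S \<times> BL)"
    using S \<open>finite BL\<close> by (intro card_image_le) simp
  finally show ?thesis
    using BL(4) by (simp add: card_cartesian_product)
qed

definition singular_tuple_space :: "'a set \<Rightarrow> ('a \<Rightarrow> 'w) set \<Rightarrow> bool" where
  "singular_tuple_space S X \<longleftrightarrow> H.subspace X \<and> X \<subseteq> tuple_space S UNIV \<and>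
     (\<forall>h\<in>X. totally_singular b (h ` S))"

definition value_span :: "('a \<Rightarrow> 'w) set \<Rightarrow> 'a set \<Rightarrow> 'w set" where
  "value_span X S = W.span (\<Union>h\<in>X. h ` S)"

lemma subspace_value_span: "W.subspace (value_span X S)"
  by (simp add: value_span_def)

lemma value_in_value_span: "h \<in> X \<Longrightarrow> e \<in> S \<Longrightarrow> h e \<in> value_span X S"
  unfolding value_span_def by (rule W.span_base) blast

lemma singular_tuple_space_restrict:
  assumes "singular_tuple_space S X" "T \<subseteq> S"
  shows "singular_tuple_space T (restrict_zero T ` X)"
  unfolding singular_tuple_space_def
proof (intro conjI)
  have "H.subspace X"
    using assms(1) by (simp add: singular_tuple_space_def)
  then show "H.subspace (restrict_zero T ` X)"
    by (rule HH.linear_subspace_image[OF W.linear_restrict_zero])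
  show "restrict_zero T ` X \<subseteq> tuple_space T UNIV"
    by (auto simp: tuple_space_def restrict_zero_def)
  show "\<forall>k\<in>restrict_zero T ` X. totally_singular b (k ` T)"
  proof
    fix k assume "k \<in> restrict_zero T ` X"
    then obtain h where h: "h \<in> X" "k = restrict_zero T h"
      by blast
    have "k ` T \<subseteq> h ` S"
      using h(2) assms(2) by auto
    moreover have "totally_singular b (h ` S)"
      using assms(1) h(1) by (simp add: singular_tuple_space_def)
    ultimately show "totally_singular b (k ` T)"
      by (rule totally_singular_subset)
  qed
qed

lemma restrict_subset_tuple_space: "restrict_zero T ` X \<subseteq> tuple_space T (value_span X T)"
  by (auto simp: tuple_space_def restrict_zero_def value_in_value_span)

lemma singular_tuple_space_polarize:
  assumes X: "singular_tuple_space S X" and hg: "h \<in> X" "g \<in> X" and e: "e \<in> S" "e' \<in> S"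
  shows "b (h e) (g e') = - b (g e) (h e')"
proof -
  have sing: "b (k e) (k e') = 0" if "k \<in> X" for k
    using X that e by (auto simp: singular_tuple_space_def totally_singular_def)
  have "h + g \<in> X"
    using X hg by (simp add: singular_tuple_space_def H.subspace_add)
  then have "b (h e + g e) (h e' + g e') = 0"
    using sing[of "h + g"] by simp
  then have "b (h e) (g e') + b (g e) (h e') = 0"
    using sing[OF hg(1)] sing[OF hg(2)] by (simp add: b_add_left b_add_right add.commute)
  then show ?thesis
    by (simp add: eq_neg_iff_add_eq_0)
qed


lemma value_span_orthogonal:
  assumes X: "singular_tuple_space S X" and h: "h \<in> X" "a \<in> S"
    and T: "T \<subseteq> S" "\<forall>e\<in>T. h e = 0" and r: "r \<in> value_span X T"
  shows "b (h a) r = 0"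
proof -
  have "b (h a) v = 0" if v: "v \<in> (\<Union>g\<in>X. g ` T)" for v
  proof -
    obtain g e where g: "g \<in> X" "e \<in> T" "v = g e"
      using v by blast
    have "b (h a) (g e) = - b (g a) (h e)"
      using singular_tuple_space_polarize[OF X h(1) g(1) h(2)] g(2) T(1) by blast
    with g T(2) show ?thesis
      by simp
  qed
  then show ?thesis
    using WF.linear_eq_0_on_span[OF b_linear_right] r unfolding value_span_def by blast
qed

lemma dim_kernel_restrict_le:
  assumes a: "a \<notin> S" and X: "singular_tuple_space (insert a S) X"
  shows "H.dim {h\<in>X. restrict_zero S h = 0} + W.dim (value_span X S) \<le> dimW"
proof -
  define K where "K = {h\<in>X. restrict_zero S h = 0}"
  have X_sub: "H.subspace X" and X_tuples: "X \<subseteq> tuple_space (insert a S) UNIV"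
    using X by (simp_all add: singular_tuple_space_def)
  have "K = X \<inter> {h. restrict_zero S h = 0}"
    by (auto simp: K_def)
  then have K_sub: "H.subspace K"
    using H.subspace_inter[OF X_sub HH.linear_subspace_kernel[OF W.linear_restrict_zero]] by simp
  have K_zero: "\<forall>e\<in>S. h e = 0" if "h \<in> K" for h
    using that by (simp add: K_def restrict_zero_eq_0_iff)
  have "K \<subseteq> tuple_space {a} UNIV"
    using X_tuples K_zero by (fastforce simp: K_def tuple_space_def)
  then have "inj_on (\<lambda>h. h a) (H.span K)"
    unfolding H.span_eq_iff[THEN iffD2, OF K_sub] by (rule inj_on_subset[OF inj_on_eval_tuple_space])
  then have "H.dim K = W.dim ((\<lambda>h. h a) ` K)"
    by (rule HW.dim_image_eq_if_inj_on[OF W.linear_eval, symmetric])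
  also have "\<dots> \<le> W.dim {w. \<forall>r\<in>value_span X S. b w r = 0}"
  proof -
    obtain G where G: "finite G" "W.span G = UNIV"
      by (rule obtain_finite_span_W)
    have "(\<lambda>h. h a) ` K \<subseteq> {w. \<forall>r\<in>value_span X S. b w r = 0}"
      using value_span_orthogonal[OF X _ insertI1 subset_insertI] K_zero by (auto simp: K_def)
    then show ?thesis
      using G by (intro W.dim_subset_in_span) auto
  qed
  finally show ?thesis
    using dim_orthogonal_le[OF subspace_value_span, of X S] by (simp add: K_def)
qed

lemma dim_singular_tuple_space_insert:
  assumes S: "finite S" and a: "a \<notin> S" and X: "singular_tuple_space (insert a S) X"
  shows "H.dim X + W.dim (value_span X S) \<le> H.dim (restrict_zero S ` X) + dimW"
proof -
  obtain F :: "('a \<Rightarrow> 'w) set" where F: "finite F" "tuple_space (insert a S) UNIV \<subseteq> H.span F"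
    using S by (auto intro: finite_span_tuple_space[of "insert a S"])
  then have "H.dim X \<le> H.dim (restrict_zero S ` X) + H.dim {h\<in>X. restrict_zero S h = 0}"
    using X by (intro HH.dim_le_dim_image_plus_dim_kernel[OF W.linear_restrict_zero])
      (auto simp: singular_tuple_space_def)
  then show ?thesis
    using dim_kernel_restrict_le[OF a X] by linarith
qed

lemma dim_restrict_le:
  assumes "finite S"
  shows "H.dim (restrict_zero S ` X) \<le> card S * W.dim (value_span X S)"
proof -
  obtain F :: "('a \<Rightarrow> 'w) set" where F: "finite F" "tuple_space S (value_span X S) \<subseteq> H.span F"
    using assms by (auto intro: finite_span_tuple_space)
  have "H.dim (restrict_zero S ` X) \<le> H.dim (tuple_space S (value_span X S))"
    by (rule H.dim_subset_in_span[OF restrict_subset_tuple_space F(2,1)])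
  also have "\<dots> \<le> card S * W.dim (value_span X S)"
    using assms subspace_value_span by (rule dim_tuple_space_le)
  finally show ?thesis .
qed

theorem dim_singular_tuple_space_le:
  assumes "finite S" "2 \<le> card S" "singular_tuple_space S X"
  shows "2 * H.dim X \<le> card S * dimW"
  using assms
proof (induction S arbitrary: X rule: finite_induct)
  case empty
  then show ?case
    by simp
next
  case (insert a S)
  have IH: "2 * H.dim (restrict_zero S ` X) \<le> card S * dimW" if "2 \<le> card S"
    using insert.IH[OF that singular_tuple_space_restrict[OF insert.prems(2) subset_insertI]] .
  have "1 \<le> card S"
    using insert by simp
  from dim_count_step_le[OF dim_singular_tuple_space_insert[OF insert(1,2) insert.prems(2)]
      dim_restrict_le[OF insert(1)] this IH]
  show ?case
    using insert(1,2) by simp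
qed

lemma extremal_restrict_delete:
  assumes S: "finite S" "3 \<le> card S" "a \<in> S" and X: "singular_tuple_space S X"
    and eq: "2 * H.dim X = card S * dimW"
  shows "2 * W.dim (value_span X (S - {a})) = dimW"
    and "restrict_zero (S - {a}) ` X = tuple_space (S - {a}) (value_span X (S - {a}))"
proof -
  define T where "T = S - {a}"
  have T: "finite T" "2 \<le> card T" "a \<notin> T" "insert a T = S"
    using S by (auto simp: T_def)
  have X': "singular_tuple_space (insert a T) X"
    using X T(4) by simp
  have P: "singular_tuple_space T (restrict_zero T ` X)"
    using X' subset_insertI by (rule singular_tuple_space_restrict)
  have "2 * H.dim X = (card T + 1) * dimW"
    using eq T by auto
  note count = dim_count_step_eq[OF dim_singular_tuple_space_insert[OF T(1,3) X'] dim_restrict_le[OF T(1)]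
      T(2) dim_singular_tuple_space_le[OF T(1,2) P] this]
  then show "2 * W.dim (value_span X T) = dimW"
    by simp
  obtain F :: "('a \<Rightarrow> 'w) set" where F: "finite F" "tuple_space T (value_span X T) \<subseteq> H.span F"
    using T(1) by (auto intro: finite_span_tuple_space)
  have "H.dim (tuple_space T (value_span X T)) \<le> H.dim (restrict_zero T ` X)"
    using dim_tuple_space_le[OF T(1) subspace_value_span] count(2) by simp
  with P show "restrict_zero T ` X = tuple_space T (value_span X T)"
    using restrict_subset_tuple_space F
    by (intro H.subspace_dim_equal_in_span) (auto simp: singular_tuple_space_def)
qed

lemma totally_singular_if_tuple_space_singular:
  assumes L: "W.subspace L" and sing: "singular_tuple_space S (tuple_space S L)"
    and e: "e \<in> S" "e' \<in> S" "e \<noteq> e'"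
  shows "totally_singular b L"
  unfolding totally_singular_def
proof (intro ballI)
  fix x y assume xy: "x \<in> L" "y \<in> L"
  define h where "h = 0(e := x, e' := y)"
  have "h \<in> tuple_space S L"
    using W.subspace_0[OF L] xy e by (auto simp: tuple_space_def h_def)
  then have "totally_singular b (h ` S)"
    using sing by (simp add: singular_tuple_space_def)
  moreover have "h e = x" "h e' = y"
    using e(3) by (simp_all add: h_def)
  ultimately show "b x y = 0"
    using e(1,2) unfolding totally_singular_def by (metis imageI)
qed

lemma tuple_space_value_attained:
  assumes "restrict_zero T ` X = tuple_space T L" "W.subspace L" "e \<in> T" "r \<in> L"
  shows "\<exists>h\<in>X. h e = r"
proof -
  have "0(e := r) \<in> tuple_space T L"
    using assms(2-4) W.subspace_0 by (auto simp: tuple_space_def)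
  then obtain h where h: "h \<in> X" "restrict_zero T h = 0(e := r)"
    using assms(1) by (metis imageE)
  have "h e = restrict_zero T h e"
    using assms(3) by simp
  with h show ?thesis
    by auto
qed

lemma extremal_value_span_delete:
  assumes S: "finite S" "3 \<le> card S" "a \<in> S" and X: "singular_tuple_space S X"
    and eq: "2 * H.dim X = card S * dimW"
  shows "value_span X (S - {a}) = value_span X S"
proof
  show "value_span X (S - {a}) \<subseteq> value_span X S"
    unfolding value_span_def by (intro W.span_mono) blast
  have "h e \<in> value_span X (S - {a})" if h: "h \<in> X" and e: "e \<in> S" for h e
  proof (cases "e = a")
    case True
    have "2 \<le> card (S - {a})"
      using S by simp
    then obtain c d where cd: "c \<in> S - {a}" "d \<in> S - {a}" "c \<noteq> d"
      by (rule two_le_card_obtain)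
    have "h a \<in> value_span X (S - {c})"
      using h S(3) cd(1) by (intro value_in_value_span) auto
    moreover have "d \<in> S - {c}" "c \<in> S"
      using cd by auto
    ultimately obtain g where g: "g \<in> X" "g d = h a"
      using tuple_space_value_attained[OF extremal_restrict_delete(2)[OF S(1,2) _ X eq] subspace_value_span]
      by blast
    have "g d \<in> value_span X (S - {a})"
      using g(1) cd(2) by (rule value_in_value_span)
    with g(2) True show ?thesis
      by simp
  next
    case False
    with h e show ?thesis
      by (intro value_in_value_span) auto
  qed
  then show "value_span X S \<subseteq> value_span X (S - {a})"
    unfolding value_span_def[of X S] by (intro W.span_minimal subspace_value_span) blast
qed

lemma extremal_lagrangian:
  assumes S: "finite S" "3 \<le> card S" and X: "singular_tuple_space S X"
    and eq: "2 * H.dim X = card S * dimW"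
  shows "lagrangian scaleW b (value_span X S)"
proof -
  obtain a where a: "a \<in> S"
    using S by fastforce
  note delete = extremal_restrict_delete[OF S a X eq] and span_eq = extremal_value_span_delete[OF S a X eq]
  have "2 \<le> card (S - {a})"
    using S a by simp
  then obtain e e' where e: "e \<in> S - {a}" "e' \<in> S - {a}" "e \<noteq> e'"
    by (rule two_le_card_obtain)
  have "singular_tuple_space (S - {a}) (tuple_space (S - {a}) (value_span X S))"
    using singular_tuple_space_restrict[OF X, of "S - {a}"] delete(2) span_eq by auto
  then have "totally_singular b (value_span X S)"
    using subspace_value_span e by (intro totally_singular_if_tuple_space_singular) auto
  with delete(1) span_eq show ?thesis
    by (simp add: lagrangian_def subspace_value_span)
qed

lemma extremal_eq_tuple_space:
  assumes S: "finite S" "3 \<le> card S" and X: "singular_tuple_space S X"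
    and eq: "2 * H.dim X = card S * dimW"
  shows "X = tuple_space S (value_span X S)"
proof -
  obtain F :: "('a \<Rightarrow> 'w) set" where F: "finite F" "tuple_space S (value_span X S) \<subseteq> H.span F"
    using S(1) by (auto intro: finite_span_tuple_space)
  have "2 * H.dim (tuple_space S (value_span X S)) \<le> 2 * (card S * W.dim (value_span X S))"
    using dim_tuple_space_le[OF S(1) subspace_value_span[of X S]] by simp
  also have "\<dots> = card S * dimW"
    using extremal_lagrangian[OF S X eq] by (simp add: lagrangian_def mult.left_commute)
  also have "\<dots> = 2 * H.dim X"
    using eq by simp
  finally have "H.dim (tuple_space S (value_span X S)) \<le> H.dim X"
    by simp
  with X F show ?thesis
    by (intro H.subspace_dim_equal_in_span)
      (auto simp: singular_tuple_space_def tuple_space_def value_in_value_span)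
qed

lemma dim_restrict_Hom:
  assumes U: "vector_space scaleU" and B: "module.span scaleU B = UNIV"
    and V: "V \<subseteq> Hom scaleU scaleW UNIV" "H.subspace V"
  shows "H.dim (restrict_zero B ` V) = H.dim V"
proof -
  interpret UW: vector_space_pair scaleU scaleW
    using U W.vector_space_axioms by (rule vector_space_pair.intro)
  have "inj_on (restrict_zero B) V"
  proof (rule inj_onI)
    fix f g assume "f \<in> V" "g \<in> V" "restrict_zero B f = restrict_zero B g"
    then show "f = g"
      using V(1) UW.linear_eq_if_restrict_zero_eq[OF B] by (auto simp: Hom_def)
  qed
  then show ?thesis
    using HH.dim_image_eq_if_inj_on[OF W.linear_restrict_zero, of B V]
    unfolding H.span_eq_iff[THEN iffD2, OF V(2)] by blast
qed

lemma Hom_eq_if_restrict_eq_tuple_space: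
  assumes U: "vector_space scaleU" and B: "module.span scaleU B = UNIV" and L: "W.subspace L"
    and V: "V \<subseteq> Hom scaleU scaleW UNIV" and eq: "restrict_zero B ` V = tuple_space B L"
  shows "V = Hom scaleU scaleW L"
proof
  interpret UW: vector_space_pair scaleU scaleW
    using U W.vector_space_axioms by (rule vector_space_pair.intro)
  show "V \<subseteq> Hom scaleU scaleW L"
  proof
    fix f assume f: "f \<in> V"
    then have lin: "Vector_Spaces.linear scaleU scaleW f"
      using V by (auto simp: Hom_def)
    have "restrict_zero B f \<in> tuple_space B L"
      using eq f by blast
    then have "f e \<in> L" if "e \<in> B" for e
      using that by (simp add: tuple_space_def)
    then have "f ` UW.vs1.span B \<subseteq> L"
      unfolding UW.linear_span_image[OF lin, symmetric] using L by (intro W.span_minimal) auto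
    with lin B show "f \<in> Hom scaleU scaleW L"
      by (simp add: Hom_def)
  qed
  show "Hom scaleU scaleW L \<subseteq> V"
  proof
    fix \<phi> assume \<phi>: "\<phi> \<in> Hom scaleU scaleW L"
    then have "restrict_zero B \<phi> \<in> restrict_zero B ` V"
      unfolding eq by (auto simp: Hom_def tuple_space_def restrict_zero_def)
    then obtain f where f: "f \<in> V" "restrict_zero B f = restrict_zero B \<phi>"
      by auto
    have "f = \<phi>"
      using UW.linear_eq_if_restrict_zero_eq[OF B _ _ f(2)] f(1) \<phi> V by (auto simp: Hom_def)
    with f(1) show "\<phi> \<in> V"
      by simp
  qed
qed

end


theorem lemma12:
  fixes scaleU :: "'f::field \<Rightarrow> 'u::ab_group_add \<Rightarrow> 'u"
    and scaleW :: "'f \<Rightarrow> 'w::ab_group_add \<Rightarrow> 'w"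
    and b :: "'w \<Rightarrow> 'w \<Rightarrow> 'f"
    and V :: "('u \<Rightarrow> 'w) set"
  assumes U: "fin_dim_vs scaleU"
    and W: "fin_dim_vs scaleW"
    and dimU: "vector_space.dim scaleU (UNIV :: 'u set) > 1"
    and b: "symplectic_form scaleW b"
    and V_Hom: "V \<subseteq> Hom scaleU scaleW UNIV"
    and V_sub: "module.subspace (hom_scale scaleW) V"
    and V_sing: "\<forall>f\<in>V. totally_singular b (range f)"
  shows "2 * vector_space.dim (hom_scale scaleW) V
           \<le> vector_space.dim scaleU (UNIV :: 'u set) * vector_space.dim scaleW (UNIV :: 'w set)
    \<and> (vector_space.dim scaleU (UNIV :: 'u set) > 2 \<and>
         2 * vector_space.dim (hom_scale scaleW) V
           = vector_space.dim scaleU (UNIV :: 'u set) * vector_space.dim scaleW (UNIV :: 'w set)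
         \<longrightarrow> (\<exists>L. lagrangian scaleW b L \<and> V = Hom scaleU scaleW L))"
proof -
  interpret nondegenerate_bilinear_space scaleW b
    using W b by unfold_locales (auto simp: symplectic_form_def)
  interpret U: vector_space scaleU
    using U by (simp add: fin_dim_vs_def)
  obtain B where B: "finite B" "U.span B = UNIV" "card B = U.dim UNIV"
    using U by (rule fin_dim_vs_obtain_basis)
  define X where "X = restrict_zero B ` V"
  have "singular_tuple_space UNIV V"
    using V_sub V_sing by (simp add: singular_tuple_space_def tuple_space_def)
  then have X: "singular_tuple_space B X"
    unfolding X_def by (rule singular_tuple_space_restrict) simp
  have dim_X: "H.dim X = H.dim V"
    unfolding X_def using U.vector_space_axioms B(2) V_Hom V_sub by (rule dim_restrict_Hom)
  have "2 * H.dim V \<le> U.dim UNIV * dimW"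
    using dim_singular_tuple_space_le[OF B(1) _ X] dimU B(3) dim_X by simp
  moreover have "\<exists>L. lagrangian scaleW b L \<and> V = Hom scaleU scaleW L"
    if "U.dim UNIV > 2" "2 * H.dim V = U.dim UNIV * dimW"
  proof (intro exI conjI)
    have "3 \<le> card B" "2 * H.dim X = card B * dimW"
      using that B(3) dim_X by simp_all
    then show "lagrangian scaleW b (value_span X B)"
      using B(1) X by (intro extremal_lagrangian)
    have "restrict_zero B ` V = tuple_space B (value_span X B)"
      using extremal_eq_tuple_space[OF B(1) _ X] \<open>3 \<le> card B\<close> \<open>2 * H.dim X = _\<close>
      by (simp add: X_def)
    with U.vector_space_axioms B(2) subspace_value_span V_Hom
    show "V = Hom scaleU scaleW (value_span X B)"
      by (rule Hom_eq_if_restrict_eq_tuple_space)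
  qed
  ultimately show ?thesis
    by blast
qed

end
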